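(* Let $(\mathcal S,\mathcal A,P,r)$ be a finite MDP such that $\mathcal P^\pi g^\star=g^\star$ for every policy $\pi$, and let $(g^\star,h^\star)$ be a solution of the modified Bellman equations. Let $V^0\in\mathbb R^n$, $V^k=\tfrac12V^{k-1}+\tfrac12TV^{k-1}$ for $k\ge1$, and let $\pi_k$ be greedy policies, $T^{\pi_k}V^k=TV^k$. Then for every $k\ge1$, \[\|g^\star-g^{\pi_k}\|_\infty\le\|TV^k-V^k-g^\star\|_\infty\le\frac{4\|V^0-h^\star\|_\infty}{\sqrt{\varpi k}},\] where $\varpi=3.141592\ldots$ is the circle constant.
   Context: An MDP $(\mathcal S,\mathcal A,P,r)$ has finite state space $\mathcal S$ ($|\mathcal S|=n$, functions identified with $\mathbb R^n$), finite action space, transition probabilities $P(s'\mid s,a)$ and bounded reward $r$. For a policy $\pi$: $r^\pi(s)=\sum_a\pi(a\mid s)r(s,a)$, $\mathcal P^\pi(s,s')=\sum_a\pi(a\mid s)P(s'\mid s,a)$, $g^\pi(s)=\liminf_{T\to\infty}\frac1T\mathbb E_\pi[\sum_{t=0}^{T-1}r(s_t,a_t)\mid s_0=s]$, $g^\star=\max_\pi g^\pi$. $T^\pi V=r^\pi+\mathcal P^\pi V$, $(TV)(s)=\max_a\{r(s,a)+\sum_{s'}P(s'\mid s,a)V(s')\}$. A pair $(g,h)$ solves the modified Bellman equations if $\max_a\sum_{s'}P(s'\mid s,a)g(s')=g(s)$ and $\max_a\{r(s,a)+\sum_{s'}P(s'\mid s,a)h(s')\}=h(s)+g(s)$ for all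 $s$, with some policy attaining both maxima simultaneously; the first component of any solution equals $g^\star$. *)

theory Defs
  imports "HOL-Analysis.Analysis"
begin

text \<open>Finite MDP: states of finite type 's, actions of finite type 'a,
  transition kernel P s a s' = P(s' | s, a), reward r s a.
  Vectors in R^n are functions 's \<Rightarrow> real.\<close>

definition is_mdp :: "('s::finite \<Rightarrow> 'a::finite \<Rightarrow> 's \<Rightarrow> real) \<Rightarrow> bool" where
  "is_mdp P \<longleftrightarrow> (\<forall>s a s'. 0 \<le> P s a s') \<and> (\<forall>s a. (\<Sum>s'\<in>UNIV. P s a s') = 1)"

text \<open>(Stationary, possibly randomized) policy: q s a = q(a | s).\<close>
definition is_policy :: "('s::finite \<Rightarrow> 'a::finite \<Rightarrow> real) \<Rightarrow> bool" where
  "is_policy q \<longleftrightarrow> (\<forall>s a. 0 \<le> q s a) \<and> (\<forall>s. (\<Sum>a\<in>UNIV. q s a) = 1)"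

definition r_pol :: "('s::finite \<Rightarrow> 'a::finite \<Rightarrow> real) \<Rightarrow> ('s \<Rightarrow> 'a \<Rightarrow> real) \<Rightarrow> 's \<Rightarrow> real" where
  "r_pol r q s = (\<Sum>a\<in>UNIV. q s a * r s a)"

definition P_pol :: "('s::finite \<Rightarrow> 'a::finite \<Rightarrow> 's \<Rightarrow> real) \<Rightarrow> ('s \<Rightarrow> 'a \<Rightarrow> real) \<Rightarrow> ('s \<Rightarrow> real) \<Rightarrow> 's \<Rightarrow> real" where
  "P_pol P q V s = (\<Sum>s'\<in>UNIV. (\<Sum>a\<in>UNIV. q s a * P s a s') * V s')"

definition T_pol :: "('s::finite \<Rightarrow> 'a::finite \<Rightarrow> 's \<Rightarrow> real) \<Rightarrow> ('s \<Rightarrow> 'a \<Rightarrow> real) \<Rightarrow> ('s \<Rightarrow> 'a \<Rightarrow> real) \<Rightarrow> ('s \<Rightarrow> real) \<Rightarrow> 's \<Rightarrow> real" where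
  "T_pol P r q V s = r_pol r q s + P_pol P q V s"

definition T_opt :: "('s::finite \<Rightarrow> 'a::finite \<Rightarrow> 's \<Rightarrow> real) \<Rightarrow> ('s \<Rightarrow> 'a \<Rightarrow> real) \<Rightarrow> ('s \<Rightarrow> real) \<Rightarrow> 's \<Rightarrow> real" where
  "T_opt P r V s = Max (range (\<lambda>a. r s a + (\<Sum>s'\<in>UNIV. P s a s' * V s')))"

text \<open>Average reward of policy q:
  g^q(s) = liminf_T (1/T) E_pi[sum_{t<T} r(s_t,a_t) | s_0 = s]
          = liminf_T (1/T) sum_{t<T} ((\<P>^q)^t r^q)(s).\<close>
definition gain :: "('s::finite \<Rightarrow> 'a::finite \<Rightarrow> 's \<Rightarrow> real) \<Rightarrow> ('s \<Rightarrow> 'a \<Rightarrow> real) \<Rightarrow> ('s \<Rightarrow> 'a \<Rightarrow> real) \<Rightarrow> 's \<Rightarrow> real" where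
  "gain P r q s = real_of_ereal (liminf (\<lambda>T::nat.
      ereal ((1 / real T) * (\<Sum>t<T. ((P_pol P q ^^ t) (r_pol r q)) s))))"

definition modified_bellman :: "('s::finite \<Rightarrow> 'a::finite \<Rightarrow> 's \<Rightarrow> real) \<Rightarrow> ('s \<Rightarrow> 'a \<Rightarrow> real) \<Rightarrow> ('s \<Rightarrow> real) \<Rightarrow> ('s \<Rightarrow> real) \<Rightarrow> bool" where
  "modified_bellman P r g h \<longleftrightarrow>
     (\<forall>s. Max (range (\<lambda>a. \<Sum>s'\<in>UNIV. P s a s' * g s')) = g s) \<and>
     (\<forall>s. Max (range (\<lambda>a. r s a + (\<Sum>s'\<in>UNIV. P s a s' * h s'))) = h s + g s) \<and>
     (\<exists>d::'s \<Rightarrow> 'a. \<forall>s. (\<Sum>s'\<in>UNIV. P s (d s) s' * g s') = g s \<and>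
                         r s (d s) + (\<Sum>s'\<in>UNIV. P s (d s) s' * h s') = h s + g s)"

definition sup_norm :: "('s::finite \<Rightarrow> real) \<Rightarrow> real" where
  "sup_norm v = Max (range (\<lambda>s. \<bar>v s\<bar>))"

end

theory Submission
  imports Defs
begin

(* Subtracting the drift (k/2) g from V k turns the iteration into the Krasnoselskii-Mann
   iteration x (k+1) = (x k + U (x k)) / 2 of U W = T W - g, which is nonexpansive in the sup
   norm and, by the modified Bellman equations, has h as a fixed point. For such iterations a
   joint induction on i + j bounds d (x i) (U (x j)) by 2 d (x 0) h times the probability that
   a Binomial(i+j, 1/2) variable lies in [i-1, j]; for i = j = k this is at most
   2 binom(2k,k) / 4^k, and n binom(2n,n)^2 / 16^n increases to 1/pi by Wallis' product.
   The gain of a greedy policy is controlled by the same residual: summing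
   r^pi = V + g + e - P^pi V along the chain telescopes, so the Cesaro averages of the reward
   differ from g by at most sup |e| + O(1/T). *)

section \<open>Central binomial coefficients\<close>

definition central_binomial_frac :: "nat \<Rightarrow> real" where
  "central_binomial_frac n = real ((2*n) choose n) / 4^n"

lemma central_binomial_frac_fact: "central_binomial_frac n = fact (2*n) / (fact n ^ 2 * 4^n)"
  by (simp add: central_binomial_frac_def binomial_fact power2_eq_square mult_2)

lemma central_binomial_frac_Suc:
  "central_binomial_frac (Suc n) = central_binomial_frac n * (2*real n+1) / (2*real n+2)"
proof -
  have cancel: "a * b * F / (a^2 * D) = F / D * b / a" if "a \<noteq> 0" for a b F D :: real
    using that by (simp add: power2_eq_square ac_simps)
  have "central_binomial_frac (Suc n)
      = (2*real n+2) * (2*real n+1) * fact (2*n) / ((2*real n+2)^2 * (fact n ^ 2 * 4^n))"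
    unfolding central_binomial_frac_fact by (simp add: power2_eq_square algebra_simps)
  also have "\<dots> = central_binomial_frac n * (2*real n+1) / (2*real n+2)"
    unfolding central_binomial_frac_fact by (rule cancel) simp
  finally show ?thesis .
qed

definition Wallis_product :: "nat \<Rightarrow> real" where
  "Wallis_product n = (\<Prod>k=1..n. (4*real k^2) / (4*real k^2 - 1))"

lemma Wallis_product_Suc:
  "Wallis_product (Suc n) = Wallis_product n * (2*real n+2)^2 / ((2*real n+1) * (2*real n+3))"
proof -
  have "4 * real (Suc n)^2 - 1 = (2*real n+1) * (2*real n+3)"
    by (simp add: power2_eq_square algebra_simps)
  then show ?thesis
    unfolding Wallis_product_def by (simp add: prod.nat_ivl_Suc' power2_eq_square algebra_simps)
qed

lemma central_binomial_frac_Wallis: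
  "central_binomial_frac n ^ 2 * (2*real n+1) * Wallis_product n = 1"
proof (induction n)
  case 0
  then show ?case by (simp add: central_binomial_frac_def Wallis_product_def)
next
  case (Suc n)
  have cancel: "(c * b / a)^2 * d * (W * a^2 / (b * d)) = c^2 * b * W"
    if "a \<noteq> 0" "b \<noteq> 0" "d \<noteq> 0" for a b c d W :: real
    using that by (simp add: power2_eq_square field_simps)
  have "central_binomial_frac (Suc n) ^ 2 * (2 * real (Suc n) + 1) * Wallis_product (Suc n)
      = (central_binomial_frac n * (2*real n+1) / (2*real n+2))^2 * (2*real n+3)
        * (Wallis_product n * (2*real n+2)^2 / ((2*real n+1) * (2*real n+3)))"
    by (simp add: central_binomial_frac_Suc Wallis_product_Suc algebra_simps)
  also have "\<dots> = central_binomial_frac n ^ 2 * (2*real n+1) * Wallis_product n"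
    by (rule cancel) (simp_all add: add_pos_pos)
  finally show ?case
    using Suc.IH by simp
qed

lemma incseq_central_binomial_frac: "incseq (\<lambda>n. real n * central_binomial_frac n ^ 2)"
proof (rule incseq_SucI)
  fix n
  have "real n * (2*real n+2)^2 \<le> (real n + 1) * (2*real n+1)^2"
    by (simp add: power2_eq_square algebra_simps)
  then have "real n \<le> (real n + 1) * ((2*real n+1) / (2*real n+2))^2"
    by (simp add: power_divide le_divide_eq add_pos_pos)
  then have "real n * central_binomial_frac n ^ 2
      \<le> (real n + 1) * ((2*real n+1) / (2*real n+2))^2 * central_binomial_frac n ^ 2"
    by (rule mult_right_mono) simp
  then show "real n * central_binomial_frac n ^ 2 \<le> real (Suc n) * central_binomial_frac (Suc n) ^ 2"
    by (simp add: central_binomial_frac_Suc power_mult_distrib power_divide ac_simps)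
qed

lemma central_binomial_frac_limit: "(\<lambda>n. real n * central_binomial_frac n ^ 2) \<longlonglongrightarrow> 1 / pi"
proof -
  have "Wallis_product \<longlonglongrightarrow> pi / 2"
    unfolding Wallis_product_def[abs_def] by (rule wallis)
  then have "(\<lambda>n. 1 / (2 + 1 / real n) / Wallis_product n) \<longlonglongrightarrow> 1 / (2 + 0) / (pi / 2)"
    by (intro tendsto_intros lim_inverse_n') simp_all
  moreover have "eventually (\<lambda>n. 1 / (2 + 1 / real n) / Wallis_product n
      = real n * central_binomial_frac n ^ 2) sequentially"
    using eventually_gt_at_top[of 0]
  proof eventually_elim
    case (elim n)
    have "central_binomial_frac n ^ 2 * ((2*real n+1) * Wallis_product n) = 1"
      using central_binomial_frac_Wallis[of n] by (simp add: mult.assoc)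
    then have "central_binomial_frac n ^ 2 = 1 / ((2*real n+1) * Wallis_product n)"
      by (auto simp: eq_divide_eq)
    with elim show ?case by (simp add: field_simps)
  qed
  ultimately show ?thesis by (simp add: tendsto_cong)
qed

lemma central_binomial_frac_le:
  assumes "n \<ge> 1" shows "central_binomial_frac n \<le> 1 / sqrt (pi * n)"
proof -
  have "real n * central_binomial_frac n ^ 2 \<le> 1 / pi"
    by (rule incseq_le[OF incseq_central_binomial_frac central_binomial_frac_limit])
  then have "central_binomial_frac n ^ 2 \<le> 1 / (pi * n)"
    using assms by (simp add: field_simps)
  moreover have "central_binomial_frac n \<ge> 0" by (simp add: central_binomial_frac_def)
  ultimately have "central_binomial_frac n \<le> sqrt (1 / (pi * n))"
    by (simp add: real_le_rsqrt)
  then show ?thesis by (simp add: real_sqrt_divide)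
qed

section \<open>Krasnoselskii-Mann iteration\<close>

definition binomial_prefix :: "nat \<Rightarrow> nat \<Rightarrow> real" where
  "binomial_prefix n a = (\<Sum>t<a. real (n choose t))"

lemma binomial_prefix_Suc:
  "binomial_prefix (Suc n) a = binomial_prefix n a + binomial_prefix n (a - 1)"
proof (induction a)
  case (Suc a)
  then show ?case
    by (cases a) (simp_all add: binomial_prefix_def)
qed (simp add: binomial_prefix_def)

(* The probability that a Binomial(i+j, 1/2) variable lies in [i-1, j], where i - 1 truncates
   to 0 for i = 0. *)
definition km_coeff :: "nat \<Rightarrow> nat \<Rightarrow> real" where
  "km_coeff i j = (binomial_prefix (i+j) (Suc j) - binomial_prefix (i+j) (i-1)) / 2^(i+j)"

lemma km_coeff_0_left: "km_coeff 0 j = 1"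
  by (simp add: km_coeff_def binomial_prefix_def lessThan_Suc_atMost choose_row_sum flip: of_nat_sum)

lemma km_coeff_Suc_Suc: "km_coeff (Suc i) (Suc j) = (km_coeff i (Suc j) + km_coeff (Suc i) j) / 2"
proof -
  have "Suc i + Suc j = Suc (i + Suc j)" "Suc i + j = i + Suc j" by simp_all
  then show ?thesis
    unfolding km_coeff_def by (simp only: binomial_prefix_Suc) (simp add: field_simps)
qed

lemma km_coeff_Suc_diag: "km_coeff (Suc j) j = km_coeff j j / 2"
proof -
  have "Suc j + j = Suc (j + j)" by simp
  then show ?thesis
    unfolding km_coeff_def by (simp only: binomial_prefix_Suc) (simp add: field_simps)
qed

lemma km_coeff_diag_le:
  assumes "k \<ge> 1" shows "km_coeff k k \<le> 2 * central_binomial_frac k"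
proof -
  obtain j where k: "k = Suc j" using assms by (cases k) auto
  have "binomial_prefix (k+k) (Suc k)
      = binomial_prefix (k+k) (k-1) + real ((2*k) choose j) + real ((2*k) choose k)"
    unfolding binomial_prefix_def k by (simp add: mult_2)
  moreover have "(2::real)^(k+k) = 4^k"
    by (simp add: power_add power2_eq_square flip: power_mult_distrib)
  ultimately have "km_coeff k k = (real ((2*k) choose j) + real ((2*k) choose k)) / 4^k"
    unfolding km_coeff_def by simp
  also have "\<dots> \<le> 2 * central_binomial_frac k"
    using binomial_maximum'[of k j] by (simp add: central_binomial_frac_def divide_right_mono)
  finally show ?thesis .
qed

locale midpoint_convex_pseudometric =
  fixes d :: "'v \<Rightarrow> 'v \<Rightarrow> real" and mid :: "'v \<Rightarrow> 'v \<Rightarrow> 'v"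
  assumes triangle: "d a c \<le> d a b + d b c"
    and commute: "d a b = d b a"
    and self_zero: "d a a = 0"
    and mid_le: "d (mid a b) c \<le> (d a c + d b c) / 2"
begin

context
  fixes U :: "'v \<Rightarrow> 'v" and p :: 'v and x :: "nat \<Rightarrow> 'v"
  assumes nonexpansive: "\<And>a b. d (U a) (U b) \<le> d a b"
    and fixed_point: "U p = p"
    and iterate: "\<And>n. x (Suc n) = mid (x n) (U (x n))"
begin

lemma dist_iterate_fixed_point_le: "d (x n) p \<le> d (x 0) p"
proof (induction n)
  case (Suc n)
  have "d (x (Suc n)) p \<le> (d (x n) p + d (U (x n)) p) / 2"
    unfolding iterate by (rule mid_le)
  also have "d (U (x n)) p \<le> d (x n) p"
    using nonexpansive[of "x n" p] by (simp add: fixed_point)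
  finally show ?case using Suc.IH by simp
qed simp

lemma dist_start_image_le: "d (x 0) (U (x j)) \<le> 2 * d (x 0) p"
proof -
  have "d (x 0) (U (x j)) \<le> d (x 0) p + d p (U (x j))" by (rule triangle)
  also have "d p (U (x j)) \<le> d (x j) p"
    using nonexpansive[of p "x j"] by (simp add: fixed_point commute)
  finally show ?thesis using dist_iterate_fixed_point_le[of j] by simp
qed

lemma dist_Suc_image_le:
  assumes image: "d (x i) (U (x j)) \<le> c * km_coeff i j"
    and iter: "i < j \<Longrightarrow> d (x i) (x j) \<le> c * km_coeff (Suc i) (j - 1)"
    and "i \<le> j"
  shows "d (x (Suc i)) (U (x j)) \<le> c * km_coeff (Suc i) j"
proof -
  have "d (x (Suc i)) (U (x j)) \<le> (d (x i) (U (x j)) + d (U (x i)) (U (x j))) / 2"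
    unfolding iterate by (rule mid_le)
  also have "\<dots> \<le> c * km_coeff (Suc i) j"
  proof (cases "i = j")
    case True
    then show ?thesis using image by (simp add: self_zero km_coeff_Suc_diag)
  next
    case False
    with \<open>i \<le> j\<close> obtain j' where j': "j = Suc j'" "i < j" by (cases j) auto
    have "d (U (x i)) (U (x j)) \<le> c * km_coeff (Suc i) j'"
      using nonexpansive[of "x i" "x j"] iter j' by simp
    with image show ?thesis
      unfolding j' by (simp add: km_coeff_Suc_Suc field_simps)
  qed
  finally show ?thesis .
qed

lemma dist_iterate_Suc_le:
  assumes image: "d (x i) (U (x j)) \<le> c * km_coeff i j"
    and iter: "i < j \<Longrightarrow> d (x i) (x j) \<le> c * km_coeff (Suc i) (j - 1)"
    and "i \<le> j"
  shows "d (x i) (x (Suc j)) \<le> c * km_coeff (Suc i) j"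
proof -
  have "d (x i) (x (Suc j)) = d (x (Suc j)) (x i)" by (rule commute)
  also have "\<dots> \<le> (d (x j) (x i) + d (U (x j)) (x i)) / 2"
    unfolding iterate by (rule mid_le)
  also have "\<dots> \<le> c * km_coeff (Suc i) j"
  proof (cases "i = j")
    case True
    then show ?thesis using image by (simp add: self_zero commute km_coeff_Suc_diag)
  next
    case False
    with \<open>i \<le> j\<close> obtain j' where j': "j = Suc j'" "i < j" by (cases j) auto
    with image iter show ?thesis
      unfolding j' by (simp add: commute km_coeff_Suc_Suc field_simps)
  qed
  finally show ?thesis .
qed

lemma km_bounds:
  assumes "i \<le> j + 1"
  shows "d (x i) (U (x j)) \<le> 2 * d (x 0) p * km_coeff i j
    \<and> (i < j \<longrightarrow> d (x i) (x j) \<le> 2 * d (x 0) p * km_coeff (Suc i) (j - 1))"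
  using assms
proof (induction "i + j" arbitrary: i j rule: less_induct)
  case less
  have "d (x i) (U (x j)) \<le> 2 * d (x 0) p * km_coeff i j"
  proof (cases i)
    case 0
    then show ?thesis using dist_start_image_le by (simp add: km_coeff_0_left)
  next
    case (Suc i')
    with less.prems less.hyps[of i' j] show ?thesis
      by (auto intro: dist_Suc_image_le)
  qed
  moreover have "d (x i) (x j) \<le> 2 * d (x 0) p * km_coeff (Suc i) (j - 1)" if "i < j"
  proof -
    from that obtain j' where "j = Suc j'" "i \<le> j'" by (cases j) auto
    with less.hyps[of i j'] show ?thesis
      by (auto intro: dist_iterate_Suc_le)
  qed
  ultimately show ?case by blast
qed

lemma km_residual_le: "d (x k) (U (x k)) \<le> 2 * d (x 0) p * km_coeff k k"
  using km_bounds[of k k] by simp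

end

end

section \<open>Finite MDPs\<close>

lemma abs_le_sup_norm: "\<bar>v s\<bar> \<le> sup_norm v"
  unfolding sup_norm_def by (rule Max_ge) auto

lemma sup_norm_le: "(\<And>s. \<bar>v s\<bar> \<le> B) \<Longrightarrow> sup_norm v \<le> B"
  unfolding sup_norm_def by (subst Max_le_iff) auto

lemma sup_norm_nonneg: "0 \<le> sup_norm v"
  using abs_le_sup_norm[of v undefined] by simp

interpretation sup_norm_midpoint: midpoint_convex_pseudometric
  "\<lambda>v w. sup_norm (\<lambda>s. v s - w s)" "\<lambda>v w s. (1/2) * v s + (1/2) * w s"
proof
  fix a b c :: "'s::finite \<Rightarrow> real"
  show "sup_norm (\<lambda>s. a s - c s) \<le> sup_norm (\<lambda>s. a s - b s) + sup_norm (\<lambda>s. b s - c s)"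
  proof (rule sup_norm_le)
    fix s
    have "\<bar>a s - c s\<bar> \<le> \<bar>a s - b s\<bar> + \<bar>b s - c s\<bar>" by simp
    then show "\<bar>a s - c s\<bar> \<le> sup_norm (\<lambda>s. a s - b s) + sup_norm (\<lambda>s. b s - c s)"
      using abs_le_sup_norm[of "\<lambda>s. a s - b s" s] abs_le_sup_norm[of "\<lambda>s. b s - c s" s] by linarith
  qed
  show "sup_norm (\<lambda>s. a s - b s) = sup_norm (\<lambda>s. b s - a s)"
    unfolding sup_norm_def by (simp add: abs_minus_commute)
  show "sup_norm (\<lambda>s. a s - a s) = 0"
    unfolding sup_norm_def by simp
  show "sup_norm (\<lambda>s. (1/2) * a s + (1/2) * b s - c s)
      \<le> (sup_norm (\<lambda>s. a s - c s) + sup_norm (\<lambda>s. b s - c s)) / 2"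
  proof (rule sup_norm_le)
    fix s
    have "\<bar>(1/2) * a s + (1/2) * b s - c s\<bar> \<le> (\<bar>a s - c s\<bar> + \<bar>b s - c s\<bar>) / 2"
      by (simp add: abs_if)
    also have "\<dots> \<le> (sup_norm (\<lambda>s. a s - c s) + sup_norm (\<lambda>s. b s - c s)) / 2"
      by (intro divide_right_mono add_mono abs_le_sup_norm) simp
    finally show "\<bar>(1/2) * a s + (1/2) * b s - c s\<bar>
        \<le> (sup_norm (\<lambda>s. a s - c s) + sup_norm (\<lambda>s. b s - c s)) / 2" .
  qed
qed

lemma abs_convex_sum_le:
  fixes m :: "'s::finite \<Rightarrow> real"
  assumes "\<And>s. 0 \<le> m s" "(\<Sum>s\<in>UNIV. m s) = 1" "\<And>s. \<bar>w s\<bar> \<le> B"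
  shows "\<bar>\<Sum>s\<in>UNIV. m s * w s\<bar> \<le> B"
proof -
  have "\<bar>\<Sum>s\<in>UNIV. m s * w s\<bar> \<le> (\<Sum>s\<in>UNIV. m s * B)"
    using assms(1,3) by (intro sum_abs[THEN order_trans] sum_mono) (simp add: abs_mult mult_left_mono)
  also have "\<dots> = B" using assms(2) by (simp flip: sum_distrib_right)
  finally show ?thesis .
qed

lemma abs_P_pol_le:
  assumes "is_mdp P" "is_policy q"
  shows "\<bar>P_pol P q w s\<bar> \<le> sup_norm w"
  unfolding P_pol_def
proof (rule abs_convex_sum_le)
  show "0 \<le> (\<Sum>a\<in>UNIV. q s a * P s a s')" for s'
    using assms by (intro sum_nonneg) (simp add: is_mdp_def is_policy_def)
  have "(\<Sum>s'\<in>UNIV. \<Sum>a\<in>UNIV. q s a * P s a s') = (\<Sum>a\<in>UNIV. q s a * (\<Sum>s'\<in>UNIV. P s a s'))"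
    by (subst sum.swap) (simp add: sum_distrib_left)
  also have "\<dots> = 1" using assms by (simp add: is_mdp_def is_policy_def)
  finally show "(\<Sum>s'\<in>UNIV. \<Sum>a\<in>UNIV. q s a * P s a s') = 1" .
qed (rule abs_le_sup_norm)

lemma abs_funpow_P_pol_le:
  assumes "is_mdp P" "is_policy q"
  shows "\<bar>(P_pol P q ^^ t) w s\<bar> \<le> sup_norm w"
proof (induction t arbitrary: s)
  case (Suc t)
  have "\<bar>P_pol P q ((P_pol P q ^^ t) w) s\<bar> \<le> sup_norm ((P_pol P q ^^ t) w)"
    by (rule abs_P_pol_le[OF assms])
  also have "\<dots> \<le> sup_norm w"
    by (rule sup_norm_le) (rule Suc.IH)
  finally show ?case by simp
qed (simp add: abs_le_sup_norm)

lemma P_pol_add: "P_pol P q (\<lambda>s. a s + b s) = (\<lambda>s. P_pol P q a s + P_pol P q b s)"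
  unfolding P_pol_def by (simp add: distrib_left sum.distrib)

lemma P_pol_diff: "P_pol P q (\<lambda>s. a s - b s) = (\<lambda>s. P_pol P q a s - P_pol P q b s)"
  unfolding P_pol_def by (simp add: right_diff_distrib sum_subtractf)

lemma funpow_P_pol_add:
  "(P_pol P q ^^ t) (\<lambda>s. a s + b s) = (\<lambda>s. (P_pol P q ^^ t) a s + (P_pol P q ^^ t) b s)"
  by (induction t) (simp_all add: P_pol_add)

lemma funpow_P_pol_diff:
  "(P_pol P q ^^ t) (\<lambda>s. a s - b s) = (\<lambda>s. (P_pol P q ^^ t) a s - (P_pol P q ^^ t) b s)"
  by (induction t) (simp_all add: P_pol_diff)

lemma P_row_fixed_if_P_pol_fixed:
  fixes P :: "'s::finite \<Rightarrow> 'a::finite \<Rightarrow> 's \<Rightarrow> real"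
  assumes "\<And>q. is_policy q \<Longrightarrow> P_pol P q g = g"
  shows "(\<Sum>s'\<in>UNIV. P s a s' * g s') = g s"
proof -
  define q where "q = (\<lambda>(s::'s) b. if b = a then 1 else (0::real))"
  have "is_policy q" unfolding is_policy_def q_def by simp
  have "(\<Sum>b\<in>UNIV. q s b * P s b s') = P s a s'" for s'
  proof -
    have "(\<Sum>b\<in>UNIV. q s b * P s b s') = (\<Sum>b\<in>UNIV. if b = a then P s b s' else 0)"
      by (rule sum.cong) (simp_all add: q_def)
    then show ?thesis by simp
  qed
  then have "P_pol P q g s = (\<Sum>s'\<in>UNIV. P s a s' * g s')"
    unfolding P_pol_def by simp
  then show ?thesis using assms[OF \<open>is_policy q\<close>] by simp
qed

lemma Max_range_le_add:
  fixes u v :: "'a::finite \<Rightarrow> real"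
  assumes "\<And>a. u a \<le> v a + B"
  shows "Max (range u) \<le> Max (range v) + B"
proof -
  have "u a \<le> Max (range v) + B" for a
  proof -
    have "v a \<le> Max (range v)" by (rule Max_ge) auto
    with assms[of a] show ?thesis by linarith
  qed
  then show ?thesis by simp
qed

lemma abs_Max_range_diff_le:
  fixes f f' :: "'a::finite \<Rightarrow> real"
  assumes "\<And>a. \<bar>f a - f' a\<bar> \<le> B"
  shows "\<bar>Max (range f) - Max (range f')\<bar> \<le> B"
proof -
  have "f a \<le> f' a + B" "f' a \<le> f a + B" for a
    using assms[of a] by (simp_all add: abs_le_iff)
  then have "Max (range f) \<le> Max (range f') + B" "Max (range f') \<le> Max (range f) + B"
    by (simp_all only: Max_range_le_add)
  then show ?thesis by linarith
qed

lemma T_opt_nonexpansive: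
  assumes "is_mdp P"
  shows "\<bar>T_opt P r V s - T_opt P r W s\<bar> \<le> sup_norm (\<lambda>s. V s - W s)"
  unfolding T_opt_def
proof (rule abs_Max_range_diff_le)
  fix a
  have "(\<Sum>s'\<in>UNIV. P s a s' * V s') - (\<Sum>s'\<in>UNIV. P s a s' * W s')
      = (\<Sum>s'\<in>UNIV. P s a s' * (V s' - W s'))"
    by (simp add: sum_subtractf right_diff_distrib)
  also have "\<bar>\<dots>\<bar> \<le> sup_norm (\<lambda>s. V s - W s)"
    using assms by (intro abs_convex_sum_le abs_le_sup_norm) (auto simp: is_mdp_def)
  finally show "\<bar>r s a + (\<Sum>s'\<in>UNIV. P s a s' * V s') - (r s a + (\<Sum>s'\<in>UNIV. P s a s' * W s'))\<bar>
      \<le> sup_norm (\<lambda>s. V s - W s)" by simp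
qed

lemma T_opt_add_fixed:
  assumes "\<And>s a. (\<Sum>s'\<in>UNIV. P s a s' * g s') = g s"
  shows "T_opt P r (\<lambda>s. W s + c * g s) s = T_opt P r W s + c * g s"
proof -
  have "(\<Sum>s'\<in>UNIV. P s a s' * (W s' + c * g s'))
      = (\<Sum>s'\<in>UNIV. P s a s' * W s') + c * (\<Sum>s'\<in>UNIV. P s a s' * g s')" for a
    by (simp add: distrib_left sum.distrib sum_distrib_left ac_simps)
  then have "(\<lambda>a. r s a + (\<Sum>s'\<in>UNIV. P s a s' * (W s' + c * g s')))
      = (\<lambda>a. (r s a + (\<Sum>s'\<in>UNIV. P s a s' * W s')) + c * g s)"
    using assms[of s] by (simp add: add.assoc)
  then show ?thesis
    unfolding T_opt_def by (simp only:) (rule Max_add_commute; simp)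
qed

lemma sum_funpow_P_pol_r_pol:
  assumes "P_pol P q g = g"
  shows "(\<Sum>t<T. (P_pol P q ^^ t) (r_pol r q) s)
    = V s - (P_pol P q ^^ T) V s + real T * g s
      + (\<Sum>t<T. (P_pol P q ^^ t) (\<lambda>s. T_pol P r q V s - V s - g s) s)"
proof (induction T)
  case (Suc T)
  let ?Q = "P_pol P q"
  have "r_pol r q = (\<lambda>s. ((T_pol P r q V s - V s - g s) + g s) + (V s - ?Q V s))"
    unfolding T_pol_def by auto
  moreover have "(?Q ^^ T) g = g"
    using assms by (induction T) simp_all
  ultimately have "(?Q ^^ T) (r_pol r q) s
      = (?Q ^^ T) (\<lambda>s. T_pol P r q V s - V s - g s) s + g s + (?Q ^^ T) V s - (?Q ^^ Suc T) V s"
    by (simp add: funpow_P_pol_add funpow_P_pol_diff funpow_Suc_right del: funpow.simps)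
  with Suc.IH show ?case by (simp add: algebra_simps)
qed simp

lemma average_reward_near_gain:
  assumes "is_mdp P" "is_policy q" "P_pol P q g = g" "T \<ge> 1"
  shows "\<bar>(1 / real T) * (\<Sum>t<T. (P_pol P q ^^ t) (r_pol r q) s) - g s\<bar>
    \<le> sup_norm (\<lambda>s. T_pol P r q V s - V s - g s) + 2 * sup_norm V / real T"
proof -
  let ?Q = "P_pol P q" and ?e = "\<lambda>s. T_pol P r q V s - V s - g s"
  have V_bound: "\<bar>V s - (?Q ^^ T) V s\<bar> \<le> 2 * sup_norm V"
    using abs_le_sup_norm[of V s] abs_funpow_P_pol_le[OF assms(1,2), of T V s] by linarith
  have "\<bar>\<Sum>t<T. (?Q ^^ t) ?e s\<bar> \<le> (\<Sum>t<T. \<bar>(?Q ^^ t) ?e s\<bar>)"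
    by (rule sum_abs)
  also have "\<dots> \<le> (\<Sum>t<T. sup_norm ?e)"
    by (intro sum_mono abs_funpow_P_pol_le assms(1,2))
  finally have e_bound: "\<bar>\<Sum>t<T. (?Q ^^ t) ?e s\<bar> \<le> real T * sup_norm ?e"
    by simp
  have "(1 / real T) * (\<Sum>t<T. (?Q ^^ t) (r_pol r q) s) - g s
      = ((V s - (?Q ^^ T) V s) + (\<Sum>t<T. (?Q ^^ t) ?e s)) / real T"
    unfolding sum_funpow_P_pol_r_pol[OF assms(3), where T=T and r=r and s=s and V=V]
    using assms(4) by (simp add: field_simps)
  then have "\<bar>(1 / real T) * (\<Sum>t<T. (?Q ^^ t) (r_pol r q) s) - g s\<bar>
      = \<bar>(V s - (?Q ^^ T) V s) + (\<Sum>t<T. (?Q ^^ t) ?e s)\<bar> / real T"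
    by simp
  also have "\<dots> \<le> (2 * sup_norm V + real T * sup_norm ?e) / real T"
    using V_bound e_bound abs_triangle_ineq[of "V s - (?Q ^^ T) V s" "\<Sum>t<T. (?Q ^^ t) ?e s"]
    by (intro divide_right_mono) simp_all
  also have "\<dots> = sup_norm ?e + 2 * sup_norm V / real T"
    using assms(4) by (simp add: field_simps)
  finally show ?thesis .
qed

lemma abs_real_liminf_diff_le:
  fixes f b :: "nat \<Rightarrow> real"
  assumes near: "eventually (\<lambda>n. \<bar>f n - L\<bar> \<le> \<epsilon> + b n) sequentially"
    and "b \<longlonglongrightarrow> 0"
  shows "\<bar>real_of_ereal (liminf (\<lambda>n. ereal (f n))) - L\<bar> \<le> \<epsilon>"
proof -
  have "(\<lambda>n. L - \<epsilon> - b n) \<longlonglongrightarrow> L - \<epsilon> - 0"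
      "(\<lambda>n. L + \<epsilon> + b n) \<longlonglongrightarrow> L + \<epsilon> + 0"
    by (intro tendsto_intros assms(2))+
  then have lim: "liminf (\<lambda>n. ereal (L - \<epsilon> - b n)) = ereal (L - \<epsilon>)"
      "liminf (\<lambda>n. ereal (L + \<epsilon> + b n)) = ereal (L + \<epsilon>)"
    by (simp_all add: lim_imp_Liminf)
  have "eventually (\<lambda>n. ereal (L - \<epsilon> - b n) \<le> ereal (f n)) sequentially"
    using near by eventually_elim (simp add: abs_le_iff)
  from Liminf_mono[OF this] have "ereal (L - \<epsilon>) \<le> liminf (\<lambda>n. ereal (f n))"
    unfolding lim .
  moreover have "eventually (\<lambda>n. ereal (f n) \<le> ereal (L + \<epsilon> + b n)) sequentially"
    using near by eventually_elim (simp add: abs_le_iff)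
  from Liminf_mono[OF this] have "liminf (\<lambda>n. ereal (f n)) \<le> ereal (L + \<epsilon>)"
    unfolding lim .
  ultimately show ?thesis
    by (cases "liminf (\<lambda>n. ereal (f n))") auto
qed

lemma abs_gain_diff_le:
  assumes "is_mdp P" "is_policy q" "P_pol P q g = g"
  shows "\<bar>g s - gain P r q s\<bar> \<le> sup_norm (\<lambda>s. T_pol P r q V s - V s - g s)"
proof -
  have "eventually (\<lambda>T. \<bar>(1 / real T) * (\<Sum>t<T. (P_pol P q ^^ t) (r_pol r q) s) - g s\<bar>
      \<le> sup_norm (\<lambda>s. T_pol P r q V s - V s - g s) + 2 * sup_norm V / real T) sequentially"
    using eventually_ge_at_top[of 1] by eventually_elim (rule average_reward_near_gain[OF assms])
  moreover have "(\<lambda>T. 2 * sup_norm V / real T) \<longlonglongrightarrow> 0"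
    by (intro tendsto_divide_0[OF tendsto_const] filterlim_at_top_imp_at_infinity
        filterlim_real_sequentially)
  ultimately have "\<bar>gain P r q s - g s\<bar> \<le> sup_norm (\<lambda>s. T_pol P r q V s - V s - g s)"
    unfolding gain_def by (rule abs_real_liminf_diff_le)
  then show ?thesis by (simp add: abs_minus_commute)
qed

lemma km_value_iteration_residual_le:
  fixes P :: "'s::finite \<Rightarrow> 'a::finite \<Rightarrow> 's \<Rightarrow> real"
  assumes mdp: "is_mdp P"
    and row_fixed: "\<And>s a. (\<Sum>s'\<in>UNIV. P s a s' * g s') = g s"
    and bellman: "\<And>s. T_opt P r h s = h s + g s"
    and iter: "\<And>k. V (Suc k) = (\<lambda>s. (1/2) * V k s + (1/2) * T_opt P r (V k) s)"
  shows "sup_norm (\<lambda>s. T_opt P r (V k) s - V k s - g s)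
    \<le> 2 * sup_norm (\<lambda>s. V 0 s - h s) * km_coeff k k"
proof -
  define U where "U W s = T_opt P r W s - g s" for W s
  define W where "W k s = V k s - real k / 2 * g s" for k s
  have T_V: "T_opt P r (V k) s = T_opt P r (W k) s + real k / 2 * g s" for k s
    using T_opt_add_fixed[OF row_fixed, where r=r and W="W k" and c="real k / 2" and s=s]
    by (simp add: W_def)
  have "sup_norm (\<lambda>s. U a s - U b s) \<le> sup_norm (\<lambda>s. a s - b s)" for a b
    by (rule sup_norm_le) (use T_opt_nonexpansive[OF mdp] in \<open>simp add: U_def\<close>)
  moreover have "U h = h"
    by (simp add: U_def bellman fun_eq_iff)
  moreover have "W (Suc k) = (\<lambda>s. (1/2) * W k s + (1/2) * U (W k) s)" for k
    unfolding fun_eq_iff by (simp add: W_def U_def iter T_V algebra_simps)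
  ultimately have "sup_norm (\<lambda>s. W k s - U (W k) s) \<le> 2 * sup_norm (\<lambda>s. W 0 s - h s) * km_coeff k k"
    by (rule sup_norm_midpoint.km_residual_le)
  moreover have "sup_norm (\<lambda>s. W k s - U (W k) s) = sup_norm (\<lambda>s. T_opt P r (V k) s - V k s - g s)"
    unfolding sup_norm_def by (simp add: W_def U_def T_V abs_minus_commute algebra_simps)
  ultimately show ?thesis
    by (simp add: W_def)
qed

theorem corollary1:
  fixes P :: "'s::finite \<Rightarrow> 'a::finite \<Rightarrow> 's \<Rightarrow> real"
    and r :: "'s \<Rightarrow> 'a \<Rightarrow> real"
    and g h :: "'s \<Rightarrow> real"
    and V :: "nat \<Rightarrow> 's \<Rightarrow> real"
    and pol :: "nat \<Rightarrow> 's \<Rightarrow> 'a \<Rightarrow> real"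
  assumes mdp: "is_mdp P"
    and inv: "\<And>q. is_policy q \<Longrightarrow> P_pol P q g = g"
    and sol: "modified_bellman P r g h"
    and iter: "\<And>k. V (Suc k) = (\<lambda>s. (1/2) * V k s + (1/2) * T_opt P r (V k) s)"
    and pol_ok: "\<And>k. k \<ge> 1 \<Longrightarrow> is_policy (pol k)"
    and greedy: "\<And>k. k \<ge> 1 \<Longrightarrow> T_pol P r (pol k) (V k) = T_opt P r (V k)"
  shows "\<forall>k\<ge>1.
    sup_norm (\<lambda>s. g s - gain P r (pol k) s)
      \<le> sup_norm (\<lambda>s. T_opt P r (V k) s - V k s - g s) \<and>
    sup_norm (\<lambda>s. T_opt P r (V k) s - V k s - g s)
      \<le> 4 * sup_norm (\<lambda>s. V 0 s - h s) / sqrt (pi * real k)"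
proof (intro allI impI conjI)
  fix k :: nat
  assume k: "k \<ge> 1"
  show "sup_norm (\<lambda>s. g s - gain P r (pol k) s) \<le> sup_norm (\<lambda>s. T_opt P r (V k) s - V k s - g s)"
  proof (rule sup_norm_le)
    fix s
    show "\<bar>g s - gain P r (pol k) s\<bar> \<le> sup_norm (\<lambda>s. T_opt P r (V k) s - V k s - g s)"
      using abs_gain_diff_le[OF mdp pol_ok[OF k] inv[OF pol_ok[OF k]], where s=s and r=r and V="V k"]
      by (simp add: greedy[OF k])
  qed
  have bellman: "T_opt P r h s = h s + g s" for s
    using sol unfolding modified_bellman_def T_opt_def by blast
  have row_fixed: "(\<Sum>s'\<in>UNIV. P s a s' * g s') = g s" for s a
    using inv by (rule P_row_fixed_if_P_pol_fixed)
  have "sup_norm (\<lambda>s. T_opt P r (V k) s - V k s - g s)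
      \<le> 2 * sup_norm (\<lambda>s. V 0 s - h s) * km_coeff k k"
    using mdp row_fixed bellman iter by (rule km_value_iteration_residual_le)
  also have "\<dots> \<le> 2 * sup_norm (\<lambda>s. V 0 s - h s) * (2 * (1 / sqrt (pi * real k)))"
    using km_coeff_diag_le[OF k] central_binomial_frac_le[OF k] sup_norm_nonneg
    by (intro mult_left_mono) simp_all
  finally show "sup_norm (\<lambda>s. T_opt P r (V k) s - V k s - g s)
      \<le> 4 * sup_norm (\<lambda>s. V 0 s - h s) / sqrt (pi * real k)"
    by simp
qed

end
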